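(* Let $P$ be a simplicial $d$-dimensional polytope and let $\partial P$ denote its boundary complex (facets are the $(d-1)$-simplices on the vertex sets of the facets of $P$). Suppose there is a facet $F_0$ of $\partial P$ with the following property: setting $\mathcal{F}_0=\{F_0\}$ and, recursively, $\mathcal{F}_i$ = the set of facets of $\partial P$ not in $\mathcal{F}_0\cup\cdots\cup\mathcal{F}_{i-1}$ that share a common $(d-2)$-dimensional face (ridge) with some facet in $\mathcal{F}_{i-1}$, every linear ordering of the facets that lists all facets of $\mathcal{F}_0$, then all of $\mathcal{F}_1$, then all of $\mathcal{F}_2$, etc. (in arbitrary order within each $\mathcal{F}_i$) is a shelling order of $\partial P$, and in such an order a facet $F$ has type $i$ if and only if $F\in\mathcal{F}_i$. Then $P$ is combinatorially equivalent to the $d$-dimensional crosspolytope.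
   Context: A pure simplicial complex $\Delta$ is shellable with shelling order $F_1,\ldots,F_k$ of its facets if for all $i<j\leqslant k$ there exist $l<j$ and a vertex $v$ of $F_j$ with $F_i\cap F_j\subseteq F_l\cap F_j=F_j\setminus\{v\}$. For a shelling order, the restriction of $F_j$ is $\mathcal{R}(F_j)=\{v\in F_j: F_j\setminus\{v\}\subset F_i \text{ for some } i<j\}$, and the type of $F_j$ is $|\mathcal{R}(F_j)|$. *)

theory Defs
  imports "HOL-Analysis.Analysis"
begin

definition simplicial_polytope :: "nat \<Rightarrow> 'a::euclidean_space set \<Rightarrow> bool" where
  "simplicial_polytope d P \<longleftrightarrow> polytope P \<and> aff_dim P = int d \<and>
     (\<forall>F. F facet_of P \<longrightarrow> (int d - 1) simplex F)"

definition boundary_facets :: "'a::euclidean_space set \<Rightarrow> 'a set set" where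
  "boundary_facets P = {{v. v extreme_point_of F} | F. F facet_of P}"

definition share_ridge :: "'v set \<Rightarrow> 'v set \<Rightarrow> bool" where
  "share_ridge F G \<longleftrightarrow> F \<noteq> G \<and> card (F \<inter> G) + 1 = card F"

(* layers_aux Fs F0 i = (\<F>_i, \<F>_0 \<union> ... \<union> \<F>_i) *)
fun layers_aux :: "'v set set \<Rightarrow> 'v set \<Rightarrow> nat \<Rightarrow> 'v set set \<times> 'v set set" where
  "layers_aux Fs F0 0 = ({F0}, {F0})"
| "layers_aux Fs F0 (Suc i) =
     (let (L, U) = layers_aux Fs F0 i;
          L' = {F \<in> Fs. F \<notin> U \<and> (\<exists>G \<in> L. share_ridge F G)}
      in (L', U \<union> L'))"

definition layer :: "'v set set \<Rightarrow> 'v set \<Rightarrow> nat \<Rightarrow> 'v set set" where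
  "layer Fs F0 i = fst (layers_aux Fs F0 i)"

definition shelling_order :: "'v set list \<Rightarrow> bool" where
  "shelling_order L \<longleftrightarrow> (\<forall>j < length L. \<forall>i < j. \<exists>l < j. \<exists>v \<in> L ! j.
      L ! i \<inter> L ! j \<subseteq> L ! l \<inter> L ! j \<and> L ! l \<inter> L ! j = L ! j - {v})"

definition restriction :: "'v set list \<Rightarrow> nat \<Rightarrow> 'v set" where
  "restriction L j = {v \<in> L ! j. \<exists>i < j. L ! j - {v} \<subseteq> L ! i}"

definition facet_type :: "'v set list \<Rightarrow> nat \<Rightarrow> nat" where
  "facet_type L j = card (restriction L j)"

definition layered_order :: "'v set set \<Rightarrow> 'v set \<Rightarrow> 'v set list \<Rightarrow> bool" where
  "layered_order Fs F0 L \<longleftrightarrow> distinct L \<and> set L = Fs \<and>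
     (\<forall>p q i j. p < q \<and> q < length L \<and> L ! p \<in> layer Fs F0 i \<and> L ! q \<in> layer Fs F0 j
        \<longrightarrow> i \<le> j)"

definition comb_equiv :: "'a::euclidean_space set \<Rightarrow> 'b::euclidean_space set \<Rightarrow> bool" where
  "comb_equiv P Q \<longleftrightarrow> (\<exists>f. bij_betw f {F. F face_of P} {G. G face_of Q} \<and>
     (\<forall>F G. F face_of P \<longrightarrow> G face_of P \<longrightarrow> (F \<subseteq> G \<longleftrightarrow> f F \<subseteq> f G)))"

definition crosspolytope :: "(real ^ 'n) set" where
  "crosspolytope = convex hull {x. \<exists>i. x = axis i 1 \<or> x = - axis i 1}"

end

theory Submission
  imports Defs
begin

text \<open>In the boundary complex every ridge lies in exactly two facets. Write \<open>F\<^sub>0 = {a\<^sub>1, \<dots>, a\<^sub>d}\<close>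
  and let \<open>b\<^sub>i\<close> be the new vertex of the facet adjacent to \<open>F\<^sub>0\<close> across \<open>F\<^sub>0 - {a\<^sub>i}\<close>. The \<open>b\<^sub>i\<close> are
  distinct, since otherwise a facet of layer 1 would have type 2. By induction on \<open>k\<close>, layer \<open>k\<close>
  consists exactly of the sets obtained from \<open>F\<^sub>0\<close> by replacing \<open>k\<close> of the \<open>a\<^sub>i\<close> by the
  corresponding \<open>b\<^sub>i\<close>: a neighbour of such a facet that is not of this form would either be
  such a set of an earlier layer, or have only its new vertex in its restriction, contradicting
  its type. Hence the facets are the \<open>2\<^sup>d\<close> sets \<open>{a\<^sub>i | i \<notin> S} \<union> {b\<^sub>i | i \<in> S}\<close>, i.e. the facets of the
  crosspolytope under \<open>a\<^sub>i \<mapsto> e\<^sub>i\<close>, \<open>b\<^sub>i \<mapsto> -e\<^sub>i\<close>. As the faces of a simplicial polytope are the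
  simplices spanned by subsets of facets, this vertex bijection is an isomorphism of face
  lattices.\<close>

section \<open>Layers and layered orders\<close>

lemma layers_aux_snd: "snd (layers_aux Fs F0 i) = (\<Union>k\<le>i. layer Fs F0 k)"
proof (induction i)
  case 0
  then show ?case by (simp add: layer_def)
next
  case (Suc i)
  obtain L U where "layers_aux Fs F0 i = (L, U)" by fastforce
  with Suc show ?case by (auto simp: layer_def atMost_Suc Let_def)
qed

lemma layer_0 [simp]: "layer Fs F0 0 = {F0}"
  by (simp add: layer_def)

lemma layer_Suc:
  "layer Fs F0 (Suc i) =
     {F \<in> Fs. F \<notin> (\<Union>k\<le>i. layer Fs F0 k) \<and> (\<exists>G \<in> layer Fs F0 i. share_ridge F G)}"
proof -
  obtain L U where LU: "layers_aux Fs F0 i = (L, U)" by fastforce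
  have "L = layer Fs F0 i" using LU by (simp add: layer_def)
  moreover have "U = (\<Union>k\<le>i. layer Fs F0 k)" using LU layers_aux_snd[of Fs F0 i] by simp
  ultimately show ?thesis using LU by (simp add: layer_def Let_def)
qed

lemma layer_disjoint: "F \<in> layer Fs F0 i \<Longrightarrow> F \<in> layer Fs F0 j \<Longrightarrow> i = j"
proof (induction i j rule: linorder_less_wlog)
  case (less i j)
  then obtain j' where "j = Suc j'" by (metis less_imp_Suc_add)
  with less show ?case by (auto simp: layer_Suc)
qed auto

lemma layer_subset: "F0 \<in> Fs \<Longrightarrow> layer Fs F0 i \<subseteq> Fs"
  by (cases i) (auto simp: layer_Suc)

definition ridge_restriction :: "'v set \<Rightarrow> 'v set set \<Rightarrow> 'v set" where
  "ridge_restriction G \<A> = {v \<in> G. \<exists>H \<in> \<A>. G - {v} \<subseteq> H}"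

lemma restriction_eq_ridge_restriction:
  "j < length L \<Longrightarrow> restriction L j = ridge_restriction (L ! j) (set (take j L))"
  by (auto simp: restriction_def ridge_restriction_def nth_image[symmetric])

definition types_are_layers :: "'v set set \<Rightarrow> 'v set \<Rightarrow> bool" where
  "types_are_layers Fs F0 \<longleftrightarrow> (\<forall>L. layered_order Fs F0 L \<longrightarrow>
     (\<forall>j < length L. \<forall>i. facet_type L j = i \<longleftrightarrow> L ! j \<in> layer Fs F0 i))"

lemma set_take_sort_key:
  fixes f :: "'a \<Rightarrow> 'b::linorder" and xs :: "'a list"
  defines "L \<equiv> sort_key f xs"
  assumes "distinct xs" and j: "j < length L"
    and unique: "\<And>x. x \<in> set xs \<Longrightarrow> f x = f (L ! j) \<Longrightarrow> x = L ! j"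
  shows "set (take j L) = {x \<in> set xs. f x < f (L ! j)}"
proof -
  have L: "distinct L" "set L = set xs" using \<open>distinct xs\<close> by (simp_all add: L_def)
  have mono: "f (L ! p) \<le> f (L ! q)" if "p \<le> q" "q < length L" for p q
    using that sorted_iff_nth_mono[of "map f L"] by (simp add: L_def)
  have "L ! i \<in> set (take j L) \<longleftrightarrow> f (L ! i) < f (L ! j)" if i: "i < length L" for i
  proof -
    have "inj_on ((!) L) {0..<length L}" using L(1) by (simp add: inj_on_nth)
    then have "L ! i \<in> set (take j L) \<longleftrightarrow> i < j"
      using inj_on_image_mem_iff[of "(!) L" "{0..<length L}" i "{0..<j}"] i j by (simp add: nth_image)
    also have "\<dots> \<longleftrightarrow> f (L ! i) < f (L ! j)"
    proof
      assume "i < j"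
      then have "f (L ! i) \<le> f (L ! j)" "L ! i \<noteq> L ! j"
        using mono[of i j] i j L(1) by (auto simp: nth_eq_iff_index_eq)
      then show "f (L ! i) < f (L ! j)" using unique[of "L ! i"] i L(2) nth_mem le_neq_trans by metis
    next
      assume "f (L ! i) < f (L ! j)"
      then show "i < j" using mono[of j i] i j by (metis leD leI)
    qed
    finally show ?thesis .
  qed
  then have "x \<in> set (take j L) \<longleftrightarrow> f x < f (L ! j)" if "x \<in> set L" for x
    using that by (metis in_set_conv_nth)
  then show ?thesis using set_take_subset[of j L] L(2) by blast
qed

lemma layered_order_with_prefix:
  assumes "finite Fs" and F0: "F0 \<in> Fs" and G: "G \<in> layer Fs F0 m"
    and A: "A \<subseteq> layer Fs F0 m - {G}"
  obtains L j where "layered_order Fs F0 L" "j < length L" "L ! j = G"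
    "set (take j L) = (\<Union>k<m. layer Fs F0 k) \<union> A"
proof -
  \<comment> \<open>Sort by layer, and inside layer \<open>m\<close> put \<open>A\<close> first, then \<open>G\<close>, then the rest.\<close>
  define rank where "rank F = (if F \<in> A then 0 else if F = G then 1 else 2::nat)" for F
  define key where "key F = (if \<exists>i. F \<in> layer Fs F0 i
      then 3 * (THE i. F \<in> layer Fs F0 i) + rank F else 3 * m + 3)" for F
  have rank: "rank F < 3" "rank F = 0 \<longleftrightarrow> F \<in> A" "rank F = 1 \<longleftrightarrow> F = G" for F
    using A by (auto simp: rank_def)
  have key: "key F = 3 * i + rank F" if "F \<in> layer Fs F0 i" for F i
  proof -
    have "(THE i. F \<in> layer Fs F0 i) = i"
      using that by (blast intro: the_equality layer_disjoint)
    then show ?thesis using that by (auto simp: key_def)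
  qed
  have key_G: "key G = 3 * m + 1" using key[OF G] rank(3)[of G] by simp
  have less_key_G: "key H < key G \<longleftrightarrow> H \<in> (\<Union>k<m. layer Fs F0 k) \<union> A" for H
  proof (cases "\<exists>i. H \<in> layer Fs F0 i")
    case True
    then obtain i where i: "H \<in> layer Fs F0 i" by blast
    have "key H < key G \<longleftrightarrow> i < m \<or> (i = m \<and> rank H = 0)"
      using key[OF i] key_G rank(1)[of H] by linarith
    also have "\<dots> \<longleftrightarrow> H \<in> (\<Union>k<m. layer Fs F0 k) \<union> A"
      using i rank(2)[of H] A layer_disjoint[OF i] by blast
    finally show ?thesis .
  qed (use key_G A in \<open>auto simp: key_def\<close>)
  have key_eq_G: "H = G" if "key H = key G" for H
  proof (cases "\<exists>i. H \<in> layer Fs F0 i")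
    case True
    then obtain i where i: "H \<in> layer Fs F0 i" by blast
    then have "rank H = 1" using that key[OF i] key_G rank(1)[of H] by presburger
    then show ?thesis using rank(3) by blast
  qed (use that key_G in \<open>simp add: key_def\<close>)
  obtain xs where xs: "distinct xs" "set xs = Fs"
    using finite_distinct_list[OF \<open>finite Fs\<close>] by blast
  define L where "L = sort_key key xs"
  have L: "distinct L" "set L = Fs" using xs by (simp_all add: L_def)
  have "layered_order Fs F0 L"
    unfolding layered_order_def
  proof (intro conjI L allI impI)
    fix p q i j
    assume "p < q \<and> q < length L \<and> L ! p \<in> layer Fs F0 i \<and> L ! q \<in> layer Fs F0 j"
    moreover have "sorted (map key L)" by (simp add: L_def)
    ultimately have "key (L ! p) \<le> key (L ! q)" by (simp add: sorted_iff_nth_mono)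
    then have "3 * i + rank (L ! p) \<le> 3 * j + rank (L ! q)"
      using key[of "L ! p" i] key[of "L ! q" j] \<open>p < q \<and> q < length L \<and> _\<close> by simp
    then show "i \<le> j" using rank(1)[of "L ! q"] by presburger
  qed
  moreover obtain j where j: "j < length L" "L ! j = G"
    using G layer_subset[OF F0] L(2) by (metis in_set_conv_nth subsetD)
  moreover have "set (take j L) = (\<Union>k<m. layer Fs F0 k) \<union> A"
  proof -
    have "set (take j L) = {H \<in> Fs. key H < key G}"
      using set_take_sort_key[where f = key and xs = xs and j = j, OF xs(1)] key_eq_G j xs(2)
      unfolding L_def[symmetric] by auto
    moreover have "(\<Union>k<m. layer Fs F0 k) \<union> A \<subseteq> Fs" using A layer_subset[OF F0] by blast
    ultimately show ?thesis using less_key_G by blast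
  qed
  ultimately show ?thesis using that by blast
qed

lemma types_are_layersD:
  assumes "types_are_layers Fs F0" "layered_order Fs F0 L" "j < length L"
  shows "L ! j \<in> layer Fs F0 i \<longleftrightarrow> facet_type L j = i"
proof -
  have "\<forall>i. facet_type L j = i \<longleftrightarrow> L ! j \<in> layer Fs F0 i"
    using assms unfolding types_are_layers_def by blast
  then show ?thesis by blast
qed

lemma card_ridge_restriction_if_types_are_layers:
  assumes "types_are_layers Fs F0" "finite Fs" "F0 \<in> Fs"
    and G: "G \<in> layer Fs F0 m" and "A \<subseteq> layer Fs F0 m - {G}"
  shows "card (ridge_restriction G ((\<Union>k<m. layer Fs F0 k) \<union> A)) = m"
proof -
  obtain L j where L: "layered_order Fs F0 L" "j < length L" "L ! j = G"
    "set (take j L) = (\<Union>k<m. layer Fs F0 k) \<union> A"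
    by (rule layered_order_with_prefix[OF assms(2-5)])
  then have "facet_type L j = m" using types_are_layersD[OF assms(1) L(1,2)] G by blast
  with L show ?thesis by (simp add: facet_type_def restriction_eq_ridge_restriction)
qed

lemma in_layer_if_types_are_layers:
  assumes "types_are_layers Fs F0" "finite Fs" "F0 \<in> Fs" and "H \<in> Fs"
  shows "\<exists>i. H \<in> layer Fs F0 i"
proof -
  have "F0 \<in> layer Fs F0 0" by simp
  then obtain L where L: "layered_order Fs F0 L"
    using layered_order_with_prefix[OF assms(2,3) _ empty_subsetI] by blast
  then have "H \<in> set L" using \<open>H \<in> Fs\<close> by (simp add: layered_order_def)
  then obtain j where "j < length L" "L ! j = H" by (auto simp: in_set_conv_nth)
  then show ?thesis using types_are_layersD[OF assms(1) L] by blast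
qed

section \<open>Cross complexes\<close>

text \<open>\<open>\<alpha> i\<close> and \<open>\<beta> i\<close> play the roles of the antipodal vertices \<open>e\<^sub>i\<close> and \<open>-e\<^sub>i\<close>:
  a facet picks one vertex of each pair.\<close>
definition cross_facets :: "('i \<Rightarrow> 'v) \<Rightarrow> ('i \<Rightarrow> 'v) \<Rightarrow> 'v set set" where
  "cross_facets \<alpha> \<beta> = range (\<lambda>X. \<alpha> ` (- X) \<union> \<beta> ` X)"

definition cross_faces :: "('i \<Rightarrow> 'v) \<Rightarrow> ('i \<Rightarrow> 'v) \<Rightarrow> 'v set set" where
  "cross_faces \<alpha> \<beta> = {S. \<exists>B \<in> cross_facets \<alpha> \<beta>. S \<subseteq> B}"

lemma mem_cross_faces_iff:
  assumes "inj \<alpha>" "inj \<beta>" "range \<alpha> \<inter> range \<beta> = {}" and S: "S \<subseteq> range \<alpha> \<union> range \<beta>"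
  shows "S \<in> cross_faces \<alpha> \<beta> \<longleftrightarrow> (\<forall>i. \<not> (\<alpha> i \<in> S \<and> \<beta> i \<in> S))"
proof
  assume "S \<in> cross_faces \<alpha> \<beta>"
  then obtain X where X: "S \<subseteq> \<alpha> ` (- X) \<union> \<beta> ` X" by (auto simp: cross_faces_def cross_facets_def)
  have "i \<notin> X" if "\<alpha> i \<in> S" for i
  proof -
    have "\<alpha> i \<in> \<alpha> ` (- X)" using that X assms(3) by blast
    then show ?thesis by (simp add: inj_image_mem_iff[OF assms(1)])
  qed
  moreover have "i \<in> X" if "\<beta> i \<in> S" for i
  proof -
    have "\<beta> i \<in> \<beta> ` X" using that X assms(3) by blast
    then show ?thesis by (simp add: inj_image_mem_iff[OF assms(2)])
  qed
  ultimately show "\<forall>i. \<not> (\<alpha> i \<in> S \<and> \<beta> i \<in> S)" by blast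
next
  assume free: "\<forall>i. \<not> (\<alpha> i \<in> S \<and> \<beta> i \<in> S)"
  have "S \<subseteq> \<alpha> ` (- {i. \<beta> i \<in> S}) \<union> \<beta> ` {i. \<beta> i \<in> S}"
  proof
    fix x assume "x \<in> S"
    with S obtain i where "x = \<alpha> i \<or> x = \<beta> i" by blast
    with \<open>x \<in> S\<close> free show "x \<in> \<alpha> ` (- {i. \<beta> i \<in> S}) \<union> \<beta> ` {i. \<beta> i \<in> S}" by blast
  qed
  then show "S \<in> cross_faces \<alpha> \<beta>" unfolding cross_faces_def cross_facets_def by blast
qed

lemma Union_cross_facets: "\<Union>(cross_facets \<alpha> \<beta>) = range \<alpha> \<union> range \<beta>"
proof
  show "range \<alpha> \<union> range \<beta> \<subseteq> \<Union>(cross_facets \<alpha> \<beta>)"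
  proof -
    have "\<alpha> ` (- {}) \<union> \<beta> ` {} \<in> cross_facets \<alpha> \<beta>" "\<alpha> ` (- UNIV) \<union> \<beta> ` UNIV \<in> cross_facets \<alpha> \<beta>"
      unfolding cross_facets_def by blast+
    then show ?thesis by auto
  qed
qed (auto simp: cross_facets_def)

section \<open>Facets of a layered pseudomanifold\<close>

lemma insert_ridge_if_card_eq:
  assumes "finite B" "finite G" "card G = card B" "v \<in> B" "B - {v} \<subseteq> G" "G \<noteq> B"
  obtains w where "w \<notin> B" "G = insert w (B - {v})"
proof -
  have "v \<notin> G"
  proof
    assume "v \<in> G"
    then have "B \<subseteq> G" using assms(5) by blast
    then show False using assms(1-3,6) by (metis card_subset_eq)
  qed
  have "card B > 0" using assms(1,4) card_gt_0_iff by blast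
  then have "card (G - (B - {v})) = 1"
    using assms(1-5) by (simp add: card_Diff_subset)
  then obtain w where "G - (B - {v}) = {w}" by (meson card_1_singletonE)
  then show ?thesis using that \<open>v \<notin> G\<close> assms(5) by blast
qed

text \<open>\<open>card_ridge_restriction\<close> says that a facet \<open>G\<close> of layer \<open>m\<close> has type \<open>m\<close> in every layered
  order in which exactly the earlier layers and \<open>A\<close> precede it.\<close>
locale layered_pseudomanifold =
  fixes Fs :: "'v set set" and F0 :: "'v set"
  assumes F0_in: "F0 \<in> Fs"
    and finite_facet: "B \<in> Fs \<Longrightarrow> finite B"
    and card_facet: "B \<in> Fs \<Longrightarrow> card B = card F0"
    and ridge_in_other_facet: "B \<in> Fs \<Longrightarrow> v \<in> B \<Longrightarrow> \<exists>B'\<in>Fs. B' \<noteq> B \<and> B - {v} \<subseteq> B'"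
    and ridge_other_facet_unique: "B \<in> Fs \<Longrightarrow> v \<in> B \<Longrightarrow> B1 \<in> Fs \<Longrightarrow> B2 \<in> Fs \<Longrightarrow>
      B1 \<noteq> B \<Longrightarrow> B2 \<noteq> B \<Longrightarrow> B - {v} \<subseteq> B1 \<Longrightarrow> B - {v} \<subseteq> B2 \<Longrightarrow> B1 = B2"
    and card_ridge_restriction: "G \<in> layer Fs F0 m \<Longrightarrow> A \<subseteq> layer Fs F0 m - {G} \<Longrightarrow>
      card (ridge_restriction G ((\<Union>k<m. layer Fs F0 k) \<union> A)) = m"
    and in_some_layer: "B \<in> Fs \<Longrightarrow> \<exists>i. B \<in> layer Fs F0 i"
begin

lemma layer_subset_facets: "layer Fs F0 k \<subseteq> Fs"
  using layer_subset[OF F0_in] .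

lemma other_facet_through_ridge:
  assumes "B \<in> Fs" "G \<in> Fs" "v \<in> B" "B - {v} \<subseteq> G" "G \<noteq> B"
  obtains w where "w \<notin> B" "G = insert w (B - {v})"
  using insert_ridge_if_card_eq[of B G v] assms finite_facet card_facet by metis

lemma share_ridge_iff:
  assumes F: "F \<in> Fs" and G: "G \<in> Fs"
  shows "share_ridge F G \<longleftrightarrow> F \<noteq> G \<and> (\<exists>v\<in>G. G - {v} \<subseteq> F)"
proof
  assume "share_ridge F G"
  then have "F \<noteq> G" and "card (G - F \<inter> G) = 1"
    using F G finite_facet card_facet by (auto simp: share_ridge_def card_Diff_subset)
  then obtain v where "G - F \<inter> G = {v}" by (meson card_1_singletonE)
  then have "v \<in> G" "G - {v} \<subseteq> F" by blast+
  with \<open>F \<noteq> G\<close> show "F \<noteq> G \<and> (\<exists>v\<in>G. G - {v} \<subseteq> F)" by blast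
next
  assume "F \<noteq> G \<and> (\<exists>v\<in>G. G - {v} \<subseteq> F)"
  then obtain v where v: "v \<in> G" "G - {v} \<subseteq> F" and "F \<noteq> G" by blast
  moreover obtain w where "w \<notin> G" "F = insert w (G - {v})"
    by (rule other_facet_through_ridge[OF G F v \<open>F \<noteq> G\<close>])
  ultimately show "share_ridge F G"
    using G finite_facet card_facet by (auto simp: share_ridge_def Int_absorb2 Int_insert_left)
qed

definition opposite :: "'v \<Rightarrow> 'v" where
  "opposite v = (SOME w. w \<notin> F0 \<and> insert w (F0 - {v}) \<in> Fs)"

lemma opposite: assumes "v \<in> F0" shows "opposite v \<notin> F0" "insert (opposite v) (F0 - {v}) \<in> Fs"
proof -
  obtain G where G: "G \<in> Fs" "G \<noteq> F0" "F0 - {v} \<subseteq> G"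
    using ridge_in_other_facet[OF F0_in assms] by blast
  obtain w where "w \<notin> F0" "G = insert w (F0 - {v})"
    by (rule other_facet_through_ridge[OF F0_in G(1) assms G(3) G(2)])
  then have "\<exists>w. w \<notin> F0 \<and> insert w (F0 - {v}) \<in> Fs" using G by blast
  then show "opposite v \<notin> F0" "insert (opposite v) (F0 - {v}) \<in> Fs"
    unfolding opposite_def by (metis (mono_tags, lifting) someI_ex)+
qed

lemma opposite_in_layer_1:
  assumes "v \<in> F0" shows "insert (opposite v) (F0 - {v}) \<in> layer Fs F0 1"
proof -
  let ?B = "insert (opposite v) (F0 - {v})"
  have "?B \<noteq> F0" using opposite(1)[OF assms] by blast
  moreover have "share_ridge ?B F0"
    using share_ridge_iff[OF opposite(2)[OF assms] F0_in] \<open>?B \<noteq> F0\<close> assms by blast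
  ultimately show ?thesis using opposite(2)[OF assms] by (simp add: layer_Suc)
qed

text \<open>Two facets of layer 1 sharing their new vertex would give the second one type 2.\<close>
lemma inj_on_opposite: "inj_on opposite F0"
proof (rule inj_onI, rule ccontr)
  fix u v assume u: "u \<in> F0" and v: "v \<in> F0" and eq: "opposite u = opposite v" and "u \<noteq> v"
  let ?Bu = "insert (opposite u) (F0 - {u})" and ?Bv = "insert (opposite v) (F0 - {v})"
  have "v \<in> ?Bu" "v \<notin> ?Bv" using \<open>u \<noteq> v\<close> v opposite(1)[OF v] by auto
  then have "?Bu \<noteq> ?Bv" by blast
  then have "card (ridge_restriction ?Bv ((\<Union>k<1. layer Fs F0 k) \<union> {?Bu})) = 1"
    using opposite_in_layer_1[OF u] by (intro card_ridge_restriction opposite_in_layer_1 v) auto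
  moreover have "{opposite v, u} \<subseteq> ridge_restriction ?Bv ((\<Union>k<1. layer Fs F0 k) \<union> {?Bu})"
    using eq u \<open>u \<noteq> v\<close> opposite(1)[OF v] by (auto simp: ridge_restriction_def lessThan_Suc)
  moreover have "opposite v \<noteq> u" using u opposite(1)[OF v] by blast
  ultimately obtain x where "{opposite v, u} \<subseteq> {x}" by (metis card_1_singletonE)
  then show False using \<open>opposite v \<noteq> u\<close> by blast
qed

lemma opposite_eq_iff [simp]: "u \<in> F0 \<Longrightarrow> v \<in> F0 \<Longrightarrow> opposite u = opposite v \<longleftrightarrow> u = v"
  using inj_on_opposite by (auto simp: inj_on_eq_iff)

lemma opposite_not_in [simp]: "v \<in> F0 \<Longrightarrow> opposite v \<notin> F0"
  using opposite(1) .

definition flip :: "'v set \<Rightarrow> 'v set" where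
  "flip S = (F0 - S) \<union> opposite ` S"

lemma flip_empty: "flip {} = F0"
  by (simp add: flip_def)

lemma in_flip_iff:
  assumes "S \<subseteq> F0" and "v \<in> F0"
  shows "v \<in> flip S \<longleftrightarrow> v \<notin> S" and "opposite v \<in> flip S \<longleftrightarrow> v \<in> S"
  using assms by (auto simp: flip_def)

lemma flip_insert:
  "S \<subseteq> F0 \<Longrightarrow> i \<in> F0 - S \<Longrightarrow> flip (insert i S) = insert (opposite i) (flip S - {i})"
  by (auto simp: flip_def subset_iff)

lemma flip_remove:
  "S \<subseteq> F0 \<Longrightarrow> j \<in> S \<Longrightarrow> flip (S - {j}) = insert j (flip S - {opposite j})"
  by (auto simp: flip_def subset_iff)

lemma flip_inj: "S \<subseteq> F0 \<Longrightarrow> X \<subseteq> F0 \<Longrightarrow> flip S = flip X \<Longrightarrow> S = X"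
  using in_flip_iff(2) by blast

lemma flip_subset_flip_remove:
  assumes "S \<subseteq> F0" "X \<subseteq> F0" "i \<in> F0 - S" and "flip S - {i} \<subseteq> flip X"
  shows "S \<subseteq> X" and "X \<subseteq> insert i S"
proof -
  show "S \<subseteq> X"
  proof
    fix s assume "s \<in> S"
    then have "opposite s \<in> flip S - {i}" using assms(1,3) in_flip_iff(2)[OF assms(1)] by auto
    then show "s \<in> X" using assms in_flip_iff(2)[OF assms(2)] \<open>s \<in> S\<close> by blast
  qed
  show "X \<subseteq> insert i S"
  proof
    fix x assume "x \<in> X"
    show "x \<in> insert i S"
    proof (rule ccontr)
      assume "x \<notin> insert i S"
      then have "x \<in> flip S - {i}" using assms(2) \<open>x \<in> X\<close> in_flip_iff(1)[OF assms(1)] by auto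
      then show False using assms(2,4) \<open>x \<in> X\<close> in_flip_iff(1)[OF assms(2)] by blast
    qed
  qed
qed

definition flips :: "nat \<Rightarrow> 'v set set" where
  "flips k = flip ` {S. S \<subseteq> F0 \<and> card S = k}"

lemma finite_F0: "finite F0"
  using finite_facet F0_in .

lemma flips_0: "flips 0 = {F0}"
proof -
  have "{S. S \<subseteq> F0 \<and> card S = 0} = {{}}" using finite_F0 by (auto dest: finite_subset)
  then show ?thesis by (simp add: flips_def flip_empty)
qed

context
  fixes k :: nat
  assumes layers_upto_k: "\<And>k'. k' \<le> k \<Longrightarrow> layer Fs F0 k' = flips k'"
begin

lemma flip_in_facets:
  assumes "X \<subseteq> F0" "card X \<le> k" shows "flip X \<in> Fs"
proof -
  have "flip X \<in> layer Fs F0 (card X)" using layers_upto_k[of "card X"] assms by (simp add: flips_def)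
  then show ?thesis using layer_subset_facets by blast
qed

lemma flip_not_in_layer_Suc:
  assumes "G \<in> layer Fs F0 (Suc k)" "X \<subseteq> F0" "card X \<le> k"
  shows "G \<noteq> flip X"
proof
  assume "G = flip X"
  then have "G \<in> layer Fs F0 (card X)" using layers_upto_k[of "card X"] assms(2,3) by (simp add: flips_def)
  then show False using layer_disjoint[OF assms(1)] assms(3) by fastforce
qed

lemma new_facet_not_exchange:
  assumes G: "G \<in> layer Fs F0 (Suc k)" and S: "S \<subseteq> F0" "card S = k"
    and i: "i \<in> F0 - S" and j: "j \<in> S" and G_eq: "G = insert j (flip S - {i})"
  shows False
proof -
  define S' where "S' = S - {j}"
  have "finite S" using finite_subset[OF S(1) finite_F0] .
  then have S': "S' \<subseteq> F0" "i \<in> F0 - S'" "card S' < k"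
    using S i j card_gt_0_iff[of S] by (auto simp: S'_def)
  have flip_S': "flip S' = insert j (flip S - {opposite j})"
    using flip_remove[OF S(1) j] by (simp add: S'_def)
  have "card (insert i S') \<le> k"
    using S' finite_subset[OF S'(1) finite_F0] by simp
  moreover have "G = flip (insert i S')"
  proof (rule ridge_other_facet_unique)
    show "flip S' \<in> Fs" "flip (insert i S') \<in> Fs"
      using S' \<open>card (insert i S') \<le> k\<close> by (auto intro!: flip_in_facets)
    show "G \<in> Fs" using G layer_subset_facets by blast
    show "i \<in> flip S'" using in_flip_iff(1)[OF S'(1)] S'(2) by blast
    show "flip S' - {i} \<subseteq> G" "flip S' - {i} \<subseteq> flip (insert i S')"
      using flip_S' G_eq flip_insert[OF S'(1,2)] by auto
    have "j \<in> F0" using j S(1) by blast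
    then have "opposite j \<in> G" using G_eq j i in_flip_iff(2)[OF S(1)] by auto
    moreover have "opposite j \<notin> flip S'" using in_flip_iff(2)[OF S'(1) \<open>j \<in> F0\<close>] by (simp add: S'_def)
    ultimately show "G \<noteq> flip S'" by blast
    show "flip (insert i S') \<noteq> flip S'" using flip_inj[of "insert i S'" S'] S'(1,2) by blast
  qed
  ultimately show False
    using flip_not_in_layer_Suc[OF G] S'(1,2) by blast
qed

lemma ridge_restriction_new_facet:
  assumes G: "G \<in> layer Fs F0 (Suc k)" and S: "S \<subseteq> F0" "card S = k" and i: "i \<in> F0 - S"
    and w: "w \<notin> F0" "w \<noteq> opposite i" "w \<notin> flip S" and G_eq: "G = insert w (flip S - {i})"
  shows "ridge_restriction G (\<Union>k'<Suc k. layer Fs F0 k') \<subseteq> {w}"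
proof
  fix v assume "v \<in> ridge_restriction G (\<Union>k'<Suc k. layer Fs F0 k')"
  then obtain k' H where "k' \<le> k" "H \<in> layer Fs F0 k'" "G - {v} \<subseteq> H"
    by (auto simp: ridge_restriction_def less_Suc_eq_le)
  then obtain X where "X \<subseteq> F0" "card X \<le> k" and v_X: "G - {v} \<subseteq> flip X"
    using layers_upto_k[OF \<open>k' \<le> k\<close>] by (auto simp: flips_def)
  show "v \<in> {w}"
  proof (rule ccontr)
    assume "v \<notin> {w}"
    then have "w \<in> flip X" using v_X G_eq by blast
    then obtain j where j: "j \<in> X" "w = opposite j" using w(1) by (auto simp: flip_def)
    have "j \<notin> S" "j \<noteq> i"
      using j w in_flip_iff(2)[OF S(1)] \<open>X \<subseteq> F0\<close> by auto
    then have "j \<in> G" "j \<notin> flip X"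
      using j \<open>X \<subseteq> F0\<close> i G_eq in_flip_iff(1)[OF S(1)] in_flip_iff(1)[OF \<open>X \<subseteq> F0\<close>] by auto
    then have "v = j" using v_X by blast
    have "insert j S \<subseteq> X"
    proof
      fix s assume "s \<in> insert j S"
      moreover have "opposite s \<in> flip X" if "s \<in> S"
      proof -
        have "s \<in> F0" "j \<in> F0" using that S(1) j(1) \<open>X \<subseteq> F0\<close> by auto
        then have "opposite s \<in> flip S" "opposite s \<noteq> i" "opposite s \<noteq> j"
          using that in_flip_iff(2)[OF S(1)] i opposite_not_in by auto
        then show ?thesis using v_X G_eq \<open>v = j\<close> by blast
      qed
      ultimately show "s \<in> X"
        using j in_flip_iff(2)[OF \<open>X \<subseteq> F0\<close>] S(1) by blast
    qed
    then have "card (insert j S) \<le> card X"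
      using card_mono[OF finite_subset[OF \<open>X \<subseteq> F0\<close> finite_F0]] by blast
    moreover have "card (insert j S) = Suc k"
      using \<open>j \<notin> S\<close> S finite_subset[OF S(1) finite_F0] by simp
    ultimately show False using \<open>card X \<le> k\<close> by simp
  qed
qed

lemma new_facet_across_vertex:
  assumes G: "G \<in> layer Fs F0 (Suc k)" and S: "S \<subseteq> F0" "card S = k" and i: "i \<in> F0 - S"
    and w: "w \<notin> flip S" and G_eq: "G = insert w (flip S - {i})"
  shows "G = flip (insert i S)"
proof -
  have finite_S: "finite S" using finite_subset[OF S(1) finite_F0] .
  consider "w = opposite i" | "k = 0" | "w \<in> F0" | "w \<notin> F0" "w \<noteq> opposite i" "k > 0"
    by blast
  then show ?thesis
  proof cases
    case 1
    then show ?thesis using G_eq flip_insert[OF S(1) i] by simp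
  next
    case 2
    then have "S = {}" using S finite_S by simp
    then have flip_i: "flip (insert i S) = insert (opposite i) (F0 - {i})"
      using flip_insert[OF S(1) i] by (simp add: flip_empty)
    show ?thesis
    proof (rule ridge_other_facet_unique)
      show "F0 \<in> Fs" "i \<in> F0" "G \<in> Fs" using F0_in i G layer_subset_facets by auto
      show "flip (insert i S) \<in> Fs" using opposite(2)[of i] i flip_i by simp
      show "F0 - {i} \<subseteq> G" using G_eq \<open>S = {}\<close> by (auto simp: flip_empty)
      show "F0 - {i} \<subseteq> flip (insert i S)" using flip_i by blast
      show "G \<noteq> F0" using flip_not_in_layer_Suc[OF G, of "{}"] by (simp add: flip_empty)
      have "opposite i \<in> flip (insert i S)" using flip_i by blast
      then show "flip (insert i S) \<noteq> F0" using i by auto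
    qed
  next
    case 3
    then have "w \<in> S" using w in_flip_iff(1)[OF S(1)] by blast
    then show ?thesis using new_facet_not_exchange[OF G S i _ G_eq] by blast
  next
    case 4
    have "card (ridge_restriction G (\<Union>k'<Suc k. layer Fs F0 k')) = Suc k"
      using card_ridge_restriction[OF G, of "{}"] by simp
    moreover have "card (ridge_restriction G (\<Union>k'<Suc k. layer Fs F0 k')) \<le> 1"
      using card_mono[OF _ ridge_restriction_new_facet[OF G S i 4(1,2) w G_eq]] by simp
    ultimately show ?thesis using 4(3) by simp
  qed
qed

lemma layer_Suc_subset_flips: "layer Fs F0 (Suc k) \<subseteq> flips (Suc k)"
proof
  fix G assume G: "G \<in> layer Fs F0 (Suc k)"
  then obtain H where "H \<in> layer Fs F0 k" "share_ridge G H" by (auto simp: layer_Suc)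
  then obtain S where S: "S \<subseteq> F0" "card S = k" and "share_ridge G (flip S)"
    using layers_upto_k[of k] by (auto simp: flips_def)
  moreover have "flip S \<in> Fs" "G \<in> Fs"
    using S flip_in_facets G layer_subset_facets by auto
  ultimately obtain v where v: "v \<in> flip S" "flip S - {v} \<subseteq> G" and "G \<noteq> flip S"
    using share_ridge_iff by blast
  have finite_S: "finite S" using finite_subset[OF S(1) finite_F0] .
  consider (vertex) "v \<in> F0 - S" | (opp) j where "j \<in> S" "v = opposite j"
    using v(1) by (auto simp: flip_def)
  then show "G \<in> flips (Suc k)"
  proof cases
    case vertex
    obtain w where "w \<notin> flip S" "G = insert w (flip S - {v})"
      by (rule other_facet_through_ridge[OF \<open>flip S \<in> Fs\<close> \<open>G \<in> Fs\<close> v \<open>G \<noteq> flip S\<close>])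
    then have "G = flip (insert v S)" using new_facet_across_vertex[OF G S vertex] by blast
    moreover have "insert v S \<subseteq> F0" "card (insert v S) = Suc k" using S vertex finite_S by auto
    ultimately show ?thesis unfolding flips_def by blast
  next
    case opp
    have S': "S - {j} \<subseteq> F0" "card (S - {j}) \<le> k" using S opp(1) by auto
    have "G = flip (S - {j})"
    proof (rule ridge_other_facet_unique)
      show "flip S \<in> Fs" "v \<in> flip S" "G \<in> Fs" "flip (S - {j}) \<in> Fs" "G \<noteq> flip S"
        using \<open>flip S \<in> Fs\<close> v \<open>G \<in> Fs\<close> flip_in_facets[OF S'] \<open>G \<noteq> flip S\<close> by auto
      show "flip (S - {j}) \<noteq> flip S" using flip_inj[OF S'(1) S(1)] opp(1) by blast
      show "flip S - {v} \<subseteq> G" "flip S - {v} \<subseteq> flip (S - {j})"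
        using v(2) flip_remove[OF S(1) opp(1)] opp(2) by auto
    qed
    then show ?thesis using flip_not_in_layer_Suc[OF G S'] by blast
  qed
qed

lemma flips_subset_layer_Suc: "flips (Suc k) \<subseteq> layer Fs F0 (Suc k)"
proof
  fix Y assume "Y \<in> flips (Suc k)"
  then obtain S' where S': "S' \<subseteq> F0" "card S' = Suc k" "Y = flip S'" by (auto simp: flips_def)
  then obtain i S where S: "S' = insert i S" "i \<notin> S" "card S = k"
    using card_eq_SucD by metis
  have i: "i \<in> F0 - S" and "S \<subseteq> F0" using S S' by auto
  have "flip S \<in> layer Fs F0 k" using layers_upto_k[of k] \<open>S \<subseteq> F0\<close> S(3) by (auto simp: flips_def)
  then have "flip S \<in> Fs" using layer_subset_facets by blast
  then obtain G where G: "G \<in> Fs" "G \<noteq> flip S" "flip S - {i} \<subseteq> G"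
    using ridge_in_other_facet in_flip_iff(1)[OF \<open>S \<subseteq> F0\<close>] i by blast
  have not_earlier: "G \<notin> layer Fs F0 k'" if k': "k' \<le> k" for k'
  proof
    assume "G \<in> layer Fs F0 k'"
    then obtain X where X: "X \<subseteq> F0" "card X = k'" "G = flip X"
      using layers_upto_k[OF k'] by (auto simp: flips_def)
    then have "S \<subseteq> X" "X \<subseteq> insert i S"
      using flip_subset_flip_remove[OF \<open>S \<subseteq> F0\<close> X(1) i] G(3) by auto
    moreover have "i \<notin> X"
    proof
      assume "i \<in> X"
      then have "insert i S \<subseteq> X" using \<open>S \<subseteq> X\<close> by blast
      then have "card (insert i S) \<le> card X" using card_mono[OF finite_subset[OF X(1) finite_F0]] by blast
      then show False using S(2,3) k' X(2) finite_subset[OF \<open>S \<subseteq> F0\<close> finite_F0] by simp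
    qed
    ultimately have "X = S" by blast
    then show False using G(2) X(3) by simp
  qed
  have "share_ridge G (flip S)"
    using share_ridge_iff[OF G(1) \<open>flip S \<in> Fs\<close>] G i in_flip_iff(1)[OF \<open>S \<subseteq> F0\<close>] by blast
  then have G_layer: "G \<in> layer Fs F0 (Suc k)"
    using G(1) not_earlier \<open>flip S \<in> layer Fs F0 k\<close> by (auto simp: layer_Suc)
  then obtain X where X: "X \<subseteq> F0" "card X = Suc k" "G = flip X"
    using layer_Suc_subset_flips by (auto simp: flips_def)
  then have "S \<subseteq> X" "X \<subseteq> insert i S"
    using flip_subset_flip_remove[OF \<open>S \<subseteq> F0\<close> X(1) i] G(3) by auto
  then have "X = S'"
    using card_subset_eq[of S' X] X(2) S S' finite_subset[OF S'(1) finite_F0] by simp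
  then show "Y \<in> layer Fs F0 (Suc k)" using G_layer X(3) S'(3) by simp
qed

end

lemma layer_eq_flips: "layer Fs F0 k = flips k"
proof (induction k rule: less_induct)
  case (less k)
  show ?case
  proof (cases k)
    case 0
    then show ?thesis by (simp add: flips_0)
  next
    case (Suc k')
    then have "\<And>k''. k'' \<le> k' \<Longrightarrow> layer Fs F0 k'' = flips k''" using less by simp
    then show ?thesis
      using layer_Suc_subset_flips flips_subset_layer_Suc Suc by blast
  qed
qed

theorem facets_eq_flips: "Fs = {flip S | S. S \<subseteq> F0}"
proof
  show "Fs \<subseteq> {flip S | S. S \<subseteq> F0}"
    using in_some_layer layer_eq_flips by (fastforce simp: flips_def)
  show "{flip S | S. S \<subseteq> F0} \<subseteq> Fs"
    using layer_eq_flips layer_subset_facets by (fastforce simp: flips_def)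
qed

lemma cross_facets_reindex:
  assumes g: "bij_betw g UNIV F0"
  shows "Fs = cross_facets g (opposite \<circ> g)" and "inj g" and "inj (opposite \<circ> g)"
    and "range g \<inter> range (opposite \<circ> g) = {}"
proof -
  show "inj g" using g by (simp add: bij_betw_def)
  have range_g: "range g = F0" using g by (simp add: bij_betw_def)
  then show "inj (opposite \<circ> g)" using \<open>inj g\<close> inj_on_opposite by (simp add: comp_inj_on)
  have g_in: "g i \<in> F0" for i using range_g by blast
  then have "g i \<noteq> opposite (g j)" for i j using opposite_not_in[OF g_in[of j]] by metis
  then show "range g \<inter> range (opposite \<circ> g) = {}" by auto
  have "g ` (- X) = F0 - g ` X" for X
    using image_set_diff[OF \<open>inj g\<close>, of UNIV X] range_g by (simp add: Compl_eq_Diff_UNIV)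
  then have "flip (g ` X) = g ` (- X) \<union> (opposite \<circ> g) ` X" for X
    by (simp add: flip_def image_comp)
  moreover have "{flip S | S. S \<subseteq> F0} = range (\<lambda>X. flip (g ` X))"
  proof (intro equalityI subsetI)
    fix Y assume "Y \<in> {flip S | S. S \<subseteq> F0}"
    then obtain S where "S \<subseteq> F0" "Y = flip S" by blast
    moreover have "g ` (g -` S) = S" using \<open>S \<subseteq> F0\<close> range_g image_vimage_eq[of g S] by blast
    ultimately show "Y \<in> range (\<lambda>X. flip (g ` X))" by (metis rangeI)
  next
    fix Y assume "Y \<in> range (\<lambda>X. flip (g ` X))"
    then obtain X where "Y = flip (g ` X)" by blast
    moreover have "g ` X \<subseteq> F0" using g_in by blast
    ultimately show "Y \<in> {flip S | S. S \<subseteq> F0}" by blast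
  qed
  ultimately show "Fs = cross_facets g (opposite \<circ> g)"
    using facets_eq_flips by (simp add: cross_facets_def)
qed

end

section \<open>Face lattices via vertex sets\<close>

definition vertices :: "'a::euclidean_space set \<Rightarrow> 'a set" where
  "vertices S = {v. v extreme_point_of S}"

definition face_vertex_sets :: "'a::euclidean_space set \<Rightarrow> 'a set set" where
  "face_vertex_sets P = vertices ` {F. F face_of P}"

lemma face_eq_convex_hull_vertices:
  assumes "polytope P" "F face_of P" shows "F = convex hull (vertices F)"
proof -
  have "polytope F" using face_of_polytope_polytope assms by blast
  then show ?thesis unfolding vertices_def
    using Krein_Milman_Minkowski polytope_imp_compact polytope_imp_convex by blast
qed

lemma vertices_face_subset: "F face_of P \<Longrightarrow> vertices F \<subseteq> vertices P"
  unfolding vertices_def using extreme_point_of_face by blast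

lemma face_subset_iff_vertices_subset:
  assumes P: "polytope P" and F: "F face_of P" and G: "G face_of P"
  shows "F \<subseteq> G \<longleftrightarrow> vertices F \<subseteq> vertices G"
proof
  assume "F \<subseteq> G"
  then have "F face_of G" using face_of_subset[OF F _ face_of_imp_subset[OF G]] by blast
  then show "vertices F \<subseteq> vertices G" by (rule vertices_face_subset)
next
  assume "vertices F \<subseteq> vertices G"
  then have "convex hull (vertices F) \<subseteq> convex hull (vertices G)" by (rule hull_mono)
  then show "F \<subseteq> G" using face_eq_convex_hull_vertices[OF P F] face_eq_convex_hull_vertices[OF P G] by simp
qed

lemma comb_equiv_if_vertex_bij:
  fixes P :: "'a::euclidean_space set" and Q :: "'b::euclidean_space set"
  assumes P: "polytope P" and Q: "polytope Q"
    and \<phi>: "bij_betw \<phi> (vertices P) (vertices Q)"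
    and faces: "\<And>S. S \<subseteq> vertices P \<Longrightarrow> S \<in> face_vertex_sets P \<longleftrightarrow> \<phi> ` S \<in> face_vertex_sets Q"
  shows "comb_equiv P Q"
proof -
  define f where "f F = convex hull (\<phi> ` vertices F)" for F
  have inj: "inj_on \<phi> (vertices P)" and img: "\<phi> ` vertices P = vertices Q"
    using \<phi> by (simp_all add: bij_betw_def)
  have f_face: "f F face_of Q" "vertices (f F) = \<phi> ` vertices F" if F: "F face_of P" for F
  proof -
    have "vertices F \<in> face_vertex_sets P" using F by (auto simp: face_vertex_sets_def)
    then have "\<phi> ` vertices F \<in> face_vertex_sets Q" using faces[OF vertices_face_subset[OF F]] by simp
    then obtain G where G: "G face_of Q" "vertices G = \<phi> ` vertices F" by (auto simp: face_vertex_sets_def)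
    then have "f F = G" using face_eq_convex_hull_vertices[OF Q G(1)] by (simp add: f_def)
    then show "f F face_of Q" "vertices (f F) = \<phi> ` vertices F" using G by simp_all
  qed
  have f_mono: "F \<subseteq> G \<longleftrightarrow> f F \<subseteq> f G" if F: "F face_of P" and G: "G face_of P" for F G
  proof -
    have "F \<subseteq> G \<longleftrightarrow> vertices F \<subseteq> vertices G" using face_subset_iff_vertices_subset[OF P F G] .
    also have "\<dots> \<longleftrightarrow> \<phi> ` vertices F \<subseteq> \<phi> ` vertices G"
      using inj_on_image_subset_iff[OF inj vertices_face_subset[OF F] vertices_face_subset[OF G]] by simp
    also have "\<dots> \<longleftrightarrow> f F \<subseteq> f G"
      using face_subset_iff_vertices_subset[OF Q f_face(1)[OF F] f_face(1)[OF G]] f_face(2) F G by simp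
    finally show ?thesis .
  qed
  have "f ` {F. F face_of P} = {G. G face_of Q}"
  proof
    show "f ` {F. F face_of P} \<subseteq> {G. G face_of Q}" using f_face by blast
    show "{G. G face_of Q} \<subseteq> f ` {F. F face_of P}"
    proof
      fix G assume "G \<in> {G. G face_of Q}"
      then have G: "G face_of Q" by simp
      define S where "S = inv_into (vertices P) \<phi> ` vertices G"
      have S: "S \<subseteq> vertices P" "\<phi> ` S = vertices G"
        unfolding S_def using vertices_face_subset[OF G] img
        by (auto simp: image_inv_into_cancel inv_into_into)
      have "vertices G \<in> face_vertex_sets Q" using G by (auto simp: face_vertex_sets_def)
      then have "S \<in> face_vertex_sets P" using faces[OF S(1)] S(2) by simp
      then obtain F where F: "F face_of P" "vertices F = S" by (auto simp: face_vertex_sets_def)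
      then have "f F = G" using face_eq_convex_hull_vertices[OF Q G] S(2) by (simp add: f_def)
      then show "G \<in> f ` {F. F face_of P}" using F by blast
    qed
  qed
  moreover have "inj_on f {F. F face_of P}"
    using f_mono by (intro inj_onI) (metis mem_Collect_eq subset_antisym subset_refl)
  ultimately show ?thesis unfolding comb_equiv_def bij_betw_def using f_mono by blast
qed

lemma comb_equiv_if_cross_faces:
  fixes P :: "'a::euclidean_space set" and Q :: "'b::euclidean_space set"
    and \<alpha> \<beta> :: "'i \<Rightarrow> 'a" and \<alpha>' \<beta>' :: "'i \<Rightarrow> 'b"
  assumes "polytope P" "polytope Q"
    and \<alpha>\<beta>: "inj \<alpha>" "inj \<beta>" "range \<alpha> \<inter> range \<beta> = {}"
    and \<alpha>'\<beta>': "inj \<alpha>'" "inj \<beta>'" "range \<alpha>' \<inter> range \<beta>' = {}"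
    and vP: "vertices P = range \<alpha> \<union> range \<beta>" and vQ: "vertices Q = range \<alpha>' \<union> range \<beta>'"
    and fP: "face_vertex_sets P = insert (vertices P) (cross_faces \<alpha> \<beta>)"
    and fQ: "face_vertex_sets Q = insert (vertices Q) (cross_faces \<alpha>' \<beta>')"
  shows "comb_equiv P Q"
proof -
  define \<phi> where "\<phi> v = (if v \<in> range \<alpha> then \<alpha>' (inv \<alpha> v) else \<beta>' (inv \<beta> v))" for v
  have \<phi>_\<alpha>: "\<phi> (\<alpha> i) = \<alpha>' i" and \<phi>_\<beta>: "\<phi> (\<beta> i) = \<beta>' i" for i
    using \<alpha>\<beta> by (auto simp: \<phi>_def)
  have "\<alpha>' i \<noteq> \<beta>' j" "\<beta>' j \<noteq> \<alpha>' i" for i j using \<alpha>'\<beta>'(3) by blast+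
  then have inj: "inj_on \<phi> (vertices P)"
    unfolding vP using \<alpha>'\<beta>'(1,2) by (auto intro!: inj_onI simp: \<phi>_\<alpha> \<phi>_\<beta> inj_eq)
  have img: "\<phi> ` vertices P = vertices Q"
    unfolding vP vQ image_Un image_image \<phi>_\<alpha> \<phi>_\<beta> by simp
  show ?thesis
  proof (rule comb_equiv_if_vertex_bij[OF assms(1,2)])
    show "bij_betw \<phi> (vertices P) (vertices Q)" using inj img by (simp add: bij_betw_def)
    fix S assume S: "S \<subseteq> vertices P"
    have "\<alpha> i \<in> vertices P" "\<beta> i \<in> vertices P" for i using vP by auto
    then have mem: "\<alpha> i \<in> S \<longleftrightarrow> \<alpha>' i \<in> \<phi> ` S" "\<beta> i \<in> S \<longleftrightarrow> \<beta>' i \<in> \<phi> ` S" for i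
      using inj_on_image_mem_iff[OF inj _ S] by (simp_all add: \<phi>_\<alpha>[symmetric] \<phi>_\<beta>[symmetric])
    have "S = vertices P \<longleftrightarrow> \<phi> ` S = vertices Q"
      using inj_on_image_eq_iff[OF inj S subset_refl] img by simp
    moreover have "S \<in> cross_faces \<alpha> \<beta> \<longleftrightarrow> (\<forall>i. \<not> (\<alpha> i \<in> S \<and> \<beta> i \<in> S))"
      using S vP by (intro mem_cross_faces_iff[OF \<alpha>\<beta>]) simp
    moreover have "\<phi> ` S \<in> cross_faces \<alpha>' \<beta>' \<longleftrightarrow> (\<forall>i. \<not> (\<alpha>' i \<in> \<phi> ` S \<and> \<beta>' i \<in> \<phi> ` S))"
      using image_mono[OF S, of \<phi>] img vQ by (intro mem_cross_faces_iff[OF \<alpha>'\<beta>']) simp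
    ultimately show "S \<in> face_vertex_sets P \<longleftrightarrow> \<phi> ` S \<in> face_vertex_sets Q"
      unfolding fP fQ using mem by auto
  qed
qed

section \<open>The crosspolytope\<close>

definition cross_vertices :: "(real ^ 'n) set" where
  "cross_vertices = range (\<lambda>i. axis i 1) \<union> range (\<lambda>i. - axis i 1)"

definition antipodal_free :: "(real ^ 'n) set \<Rightarrow> bool" where
  "antipodal_free S \<longleftrightarrow> (\<forall>i. \<not> (axis i 1 \<in> S \<and> - axis i 1 \<in> S))"

lemma crosspolytope_eq: "(crosspolytope :: (real ^ 'n) set) = convex hull cross_vertices"
proof -
  have "{x :: real ^ 'n. \<exists>i. x = axis i 1 \<or> x = - axis i 1} = cross_vertices"
    by (auto simp: cross_vertices_def)
  then show ?thesis by (simp add: crosspolytope_def)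
qed

lemma finite_cross_vertices: "finite cross_vertices"
  by (simp add: cross_vertices_def)

lemma polytope_crosspolytope: "polytope crosspolytope"
  unfolding crosspolytope_eq by (rule polytope_convex_hull[OF finite_cross_vertices])

lemma axis_neq_neg_axis: "axis i (1::real) \<noteq> - axis j 1"
proof
  assume "axis i (1::real) = - axis j 1"
  then have "axis i (1::real) $ i = (- axis j 1) $ i" by simp
  then show False by (cases "i = j") (auto simp: axis_def)
qed

lemma convex_hull_inter_supporting_hyperplane:
  fixes V :: "'a::euclidean_space set"
  assumes "finite V" and le: "\<And>v. v \<in> V \<Longrightarrow> c \<bullet> v \<le> b"
  shows "convex hull V \<inter> {x. c \<bullet> x = b} face_of convex hull V"
    and "convex hull V \<inter> {x. c \<bullet> x = b} = convex hull {v \<in> V. c \<bullet> v = b}"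
proof -
  let ?F = "convex hull V \<inter> {x. c \<bullet> x = b}"
  have "convex hull V \<subseteq> {x. c \<bullet> x \<le> b}"
    using le by (intro hull_minimal) (auto simp: convex_halfspace_le)
  then show F: "?F face_of convex hull V"
    using face_of_Int_supporting_hyperplane_le[OF convex_convex_hull] by blast
  have "vertices ?F \<subseteq> {v \<in> V. c \<bullet> v = b}"
  proof
    fix v assume "v \<in> vertices ?F"
    then have "v extreme_point_of convex hull V" "c \<bullet> v = b"
      using extreme_point_of_face[OF F] by (auto simp: vertices_def extreme_point_of_def)
    then show "v \<in> {v \<in> V. c \<bullet> v = b}" using extreme_point_of_convex_hull by blast
  qed
  then have "?F \<subseteq> convex hull {v \<in> V. c \<bullet> v = b}"
    using face_eq_convex_hull_vertices[OF polytope_convex_hull[OF \<open>finite V\<close>] F] hull_mono by blast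
  moreover have "convex hull {v \<in> V. c \<bullet> v = b} \<subseteq> convex hull V"
    by (rule hull_mono) blast
  moreover have "convex hull {v \<in> V. c \<bullet> v = b} \<subseteq> {x. c \<bullet> x = b}"
    by (rule hull_minimal) (auto simp: convex_hyperplane)
  ultimately show "?F = convex hull {v \<in> V. c \<bullet> v = b}" by blast
qed

lemma antipodal_free_face:
  fixes S :: "(real ^ 'n) set"
  assumes "antipodal_free S" and "S \<subseteq> cross_vertices"
  shows "convex hull S face_of crosspolytope"
proof -
  \<comment> \<open>\<open>S\<close> is cut out by the hyperplane \<open>c \<bullet> x = 1\<close>, where \<open>c\<close> has the signs of the points of \<open>S\<close>.\<close>
  define c :: "real ^ 'n" where
    "c = (\<chi> i. if axis i 1 \<in> S then 1 else if - axis i 1 \<in> S then -1 else 0)"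
  have c: "c \<bullet> v \<le> 1" "c \<bullet> v = 1 \<longleftrightarrow> v \<in> S" if "v \<in> cross_vertices" for v
    using that assms(1) by (auto simp: cross_vertices_def c_def inner_axis antipodal_free_def split: if_splits)
  then have "{v \<in> cross_vertices. c \<bullet> v = 1} = S" using assms(2) by auto
  then show ?thesis
    using convex_hull_inter_supporting_hyperplane[OF finite_cross_vertices, of c 1] c(1)
    by (simp add: crosspolytope_eq)
qed

lemma vertices_crosspolytope: "vertices crosspolytope = cross_vertices"
proof
  show "vertices crosspolytope \<subseteq> cross_vertices"
    unfolding vertices_def crosspolytope_eq using extreme_point_of_convex_hull by blast
  show "cross_vertices \<subseteq> vertices crosspolytope"
  proof
    fix v :: "real ^ 'n" assume "v \<in> cross_vertices"
    moreover have "antipodal_free {v}"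
      unfolding antipodal_free_def using axis_neq_neg_axis by (metis singletonD)
    ultimately have "{v} face_of crosspolytope" using antipodal_free_face[of "{v}"] by simp
    then show "v \<in> vertices crosspolytope" by (simp add: vertices_def face_of_singleton)
  qed
qed

lemma vertices_convex_hull_antipodal_free:
  fixes S :: "(real ^ 'n) set"
  assumes "antipodal_free S" "S \<subseteq> cross_vertices"
  shows "vertices (convex hull S) = S"
proof
  show "vertices (convex hull S) \<subseteq> S"
    unfolding vertices_def using extreme_point_of_convex_hull by blast
  show "S \<subseteq> vertices (convex hull S)"
    using extreme_point_of_face[OF antipodal_free_face[OF assms]] vertices_crosspolytope assms(2)
      hull_subset[of S convex] by (auto simp: vertices_def)
qed

text \<open>A face containing two antipodal vertices contains their midpoint \<open>0\<close>, which lies in the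
  relative interior of every segment between antipodal vertices.\<close>
lemma proper_face_antipodal_free:
  fixes F :: "(real ^ 'n) set"
  assumes F: "F face_of crosspolytope" and "F \<noteq> crosspolytope"
  shows "antipodal_free (vertices F)"
proof (rule ccontr)
  assume "\<not> antipodal_free (vertices F)"
  then obtain i where "axis i 1 \<in> F" "- axis i 1 \<in> F"
    by (auto simp: antipodal_free_def vertices_def extreme_point_of_def)
  then have "midpoint (axis i 1) (- axis i (1::real)) \<in> F"
    using face_of_imp_convex[OF F] midpoint_in_closed_segment convex_contains_segment by blast
  then have "0 \<in> F" by (simp add: midpoint_def)
  have "cross_vertices \<subseteq> F"
  proof
    fix v :: "real ^ 'n" assume "v \<in> cross_vertices"
    then obtain j where j: "v = axis j 1 \<or> v = - axis j 1" by (auto simp: cross_vertices_def)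
    have "0 \<in> open_segment (axis j 1) (- axis j (1::real))"
      using midpoint_in_open_segment[of "axis j (1::real)" "- axis j 1"] axis_neq_neg_axis[of j j]
      by (simp add: midpoint_def)
    moreover have "axis j 1 \<in> crosspolytope" "- axis j (1::real) \<in> crosspolytope"
      unfolding crosspolytope_eq by (auto intro!: hull_inc simp: cross_vertices_def)
    ultimately show "v \<in> F" using face_ofD[OF F _ _ _ \<open>0 \<in> F\<close>] j by blast
  qed
  then have "crosspolytope \<subseteq> F"
    unfolding crosspolytope_eq using face_of_imp_convex[OF F] by (simp add: hull_minimal)
  then show False using assms face_of_imp_subset[OF F] by blast
qed

lemma face_vertex_sets_crosspolytope:
  "face_vertex_sets (crosspolytope :: (real ^ 'n) set) =
    insert cross_vertices {S. S \<subseteq> cross_vertices \<and> antipodal_free S}" (is "?L = ?R")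
proof
  show "?L \<subseteq> ?R"
  proof
    fix S assume "S \<in> ?L"
    then obtain F where F: "F face_of crosspolytope" "S = vertices F" by (auto simp: face_vertex_sets_def)
    then have "S \<subseteq> cross_vertices" using vertices_face_subset vertices_crosspolytope by blast
    then show "S \<in> ?R"
      using F proper_face_antipodal_free[OF F(1)] vertices_crosspolytope by (cases "F = crosspolytope") auto
  qed
  have "S \<in> ?L" if "S \<subseteq> cross_vertices" "antipodal_free S" for S
    using antipodal_free_face[OF that(2,1)] vertices_convex_hull_antipodal_free[OF that(2,1)]
    unfolding face_vertex_sets_def by (metis image_eqI mem_Collect_eq)
  moreover have "cross_vertices \<in> ?L"
    using face_of_refl[OF polytope_imp_convex[OF polytope_crosspolytope]] vertices_crosspolytope
    unfolding face_vertex_sets_def by (metis image_eqI mem_Collect_eq)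
  ultimately show "?R \<subseteq> ?L" by blast
qed

lemma cross_faces_axis:
  "cross_faces (\<lambda>i::'n::finite. axis i (1::real)) (\<lambda>i. - axis i 1) =
    {S. S \<subseteq> cross_vertices \<and> antipodal_free S}"
proof -
  have inj: "inj (\<lambda>i::'n. axis i (1::real))" "inj (\<lambda>i::'n. - axis i (1::real))"
    by (auto intro!: injI simp: axis_eq_axis)
  have disj: "range (\<lambda>i::'n. axis i (1::real)) \<inter> range (\<lambda>i. - axis i 1) = {}"
    using axis_neq_neg_axis by blast
  have "B \<subseteq> cross_vertices" if "B \<in> cross_facets (\<lambda>i::'n. axis i (1::real)) (\<lambda>i. - axis i 1)" for B
    using that by (auto simp: cross_facets_def cross_vertices_def)
  then have "S \<subseteq> cross_vertices" if "S \<in> cross_faces (\<lambda>i::'n. axis i (1::real)) (\<lambda>i. - axis i 1)" for S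
    using that unfolding cross_faces_def by blast
  moreover have "S \<in> cross_faces (\<lambda>i::'n. axis i (1::real)) (\<lambda>i. - axis i 1) \<longleftrightarrow> antipodal_free S"
    if "S \<subseteq> cross_vertices" for S :: "(real ^ 'n) set"
    using mem_cross_faces_iff[OF inj disj, of S] that by (simp add: antipodal_free_def cross_vertices_def)
  ultimately show ?thesis by blast
qed

lemma crosspolytope_cross_faces:
  shows "inj (\<lambda>i::'n::finite. axis i (1::real))" "inj (\<lambda>i::'n. - axis i (1::real))"
    and "range (\<lambda>i::'n. axis i (1::real)) \<inter> range (\<lambda>i. - axis i 1) = {}"
    and "vertices (crosspolytope :: (real ^ 'n) set) = range (\<lambda>i. axis i 1) \<union> range (\<lambda>i. - axis i 1)"
    and "face_vertex_sets (crosspolytope :: (real ^ 'n) set) =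
      insert (vertices crosspolytope) (cross_faces (\<lambda>i. axis i 1) (\<lambda>i. - axis i 1))"
  using axis_neq_neg_axis
  by (auto intro!: injI simp: axis_eq_axis vertices_crosspolytope cross_vertices_def
      face_vertex_sets_crosspolytope cross_faces_axis)

section \<open>Boundary complexes of simplicial polytopes\<close>

lemma affine_combination_offset:
  fixes R :: "'a::euclidean_space set"
  assumes "finite R" "w0 \<notin> R" "w1 \<notin> R" "w0 \<noteq> w1"
    and u: "sum u (insert w1 (insert w0 R)) = 1" and R: "\<forall>r\<in>R. a \<bullet> r = b"
  shows "a \<bullet> (\<Sum>x\<in>insert w1 (insert w0 R). u x *\<^sub>R x) - b = u w0 * (a \<bullet> w0 - b) + u w1 * (a \<bullet> w1 - b)"
proof -
  let ?X = "insert w1 (insert w0 R)"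
  have "a \<bullet> (\<Sum>x\<in>?X. u x *\<^sub>R x) - b = (\<Sum>x\<in>?X. u x * (a \<bullet> x - b))"
    using u by (simp add: inner_sum_right sum_subtractf right_diff_distrib sum_distrib_right[symmetric])
  also have "\<dots> = u w1 * (a \<bullet> w1 - b) + u w0 * (a \<bullet> w0 - b) + (\<Sum>x\<in>R. u x * (a \<bullet> x - b))"
    using assms(1-4) by simp
  finally show ?thesis using R by simp
qed

lemma face_in_second_facet:
  fixes P :: "'a::euclidean_space set"
  assumes "polyhedron P" "F face_of P" "F \<noteq> {}" and G: "G facet_of P" "F \<subseteq> G" "F \<noteq> G"
  obtains G' where "G' facet_of P" "F \<subseteq> G'" "G' \<noteq> G"
proof -
  have "F \<noteq> P" using G facet_of_imp_subset facet_of_def by blast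
  then have "F = \<Inter>{G'. G' facet_of P \<and> F \<subseteq> G'}" using face_of_polyhedron assms(1-3) by blast
  then show ?thesis using that G by blast
qed

text \<open>Writing \<open>w\<^sub>2\<close> as an affine combination of \<open>R \<union> {v, w\<^sub>1}\<close>, the first two hyperplanes
  force positive weights on \<open>w\<^sub>1\<close> and \<open>v\<close>, and then \<open>w\<^sub>2\<close> lies strictly below the third.\<close>
lemma not_in_affine_hull_three_hyperplanes:
  fixes R :: "'a::euclidean_space set"
  assumes "finite R" "v \<notin> R" "w1 \<notin> R" "v \<noteq> w1"
    and H0: "\<forall>r\<in>R. a0 \<bullet> r = b0" "a0 \<bullet> v = b0" "a0 \<bullet> w1 < b0" "a0 \<bullet> w2 < b0"
    and H1: "\<forall>r\<in>R. a1 \<bullet> r = b1" "a1 \<bullet> w1 = b1" "a1 \<bullet> v < b1" "a1 \<bullet> w2 < b1"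
    and H2: "\<forall>r\<in>R. a2 \<bullet> r = b2" "a2 \<bullet> w2 = b2" "a2 \<bullet> v < b2" "a2 \<bullet> w1 < b2"
  shows "w2 \<notin> affine hull (insert w1 (insert v R))"
proof
  assume "w2 \<in> affine hull (insert w1 (insert v R))"
  then obtain u where u: "sum u (insert w1 (insert v R)) = 1"
    and w2: "w2 = (\<Sum>x\<in>insert w1 (insert v R). u x *\<^sub>R x)"
    using affine_hull_finite[of "insert w1 (insert v R)"] \<open>finite R\<close> by auto
  note offset = affine_combination_offset[OF assms(1-4) u, folded w2]
  have "u w1 * (a0 \<bullet> w1 - b0) < 0" using offset[OF H0(1)] H0(2,4) by simp
  then have "u w1 > 0" using H0(3) by (auto simp: mult_less_0_iff)
  have "u v * (a1 \<bullet> v - b1) < 0" using offset[OF H1(1)] H1(2,4) by simp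
  then have "u v > 0" using H1(3) by (auto simp: mult_less_0_iff)
  have "a2 \<bullet> w2 - b2 = u v * (a2 \<bullet> v - b2) + u w1 * (a2 \<bullet> w1 - b2)" using offset[OF H2(1)] .
  moreover have "u v * (a2 \<bullet> v - b2) < 0" "u w1 * (a2 \<bullet> w1 - b2) < 0"
    using \<open>u v > 0\<close> \<open>u w1 > 0\<close> H2(3,4) by (simp_all add: mult_pos_neg)
  ultimately show False using H2(2) by simp
qed

locale simplicial =
  fixes P :: "'a::euclidean_space set" and d :: nat
  assumes simplicial: "simplicial_polytope d P" and dim_pos: "d \<ge> 1"
begin

lemma polytope: "polytope P" and aff_dim: "aff_dim P = int d"
  and facet_simplex: "F facet_of P \<Longrightarrow> (int d - 1) simplex F"
  using simplicial by (auto simp: simplicial_polytope_def)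

lemma polyhedron: "polyhedron P"
  using polytope polytope_imp_polyhedron by blast

lemma boundary_facets_eq: "boundary_facets P = vertices ` {F. F facet_of P}"
  by (auto simp: boundary_facets_def vertices_def)

lemma boundary_facetE:
  assumes "B \<in> boundary_facets P"
  obtains G where "G facet_of P" "B = vertices G" "\<not> affine_dependent B" "finite B" "card B = d"
    "G = convex hull B"
proof -
  obtain G where G: "G facet_of P" "B = vertices G" using assms boundary_facets_eq by auto
  then obtain C where C: "\<not> affine_dependent C" "card C = d" "G = convex hull C"
    using facet_simplex by (auto simp: simplex_def)
  then have "B = C" using G(2) extreme_point_of_convex_hull_affine_independent by (auto simp: vertices_def)
  then show ?thesis using that G C aff_independent_finite by blast
qed

lemma finite_boundary_facets: "finite (boundary_facets P)"
  unfolding boundary_facets_eq using finite_polytope_facets[OF polytope] by simp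

lemma vertices_eq_Union_boundary_facets: "vertices P = \<Union>(boundary_facets P)"
proof
  show "\<Union>(boundary_facets P) \<subseteq> vertices P"
    unfolding boundary_facets_eq using vertices_face_subset facet_of_imp_face_of by blast
  show "vertices P \<subseteq> \<Union>(boundary_facets P)"
  proof
    fix v assume v: "v \<in> vertices P"
    then have "{v} face_of P" by (simp add: vertices_def face_of_singleton)
    moreover have "{v} \<noteq> P" using aff_dim dim_pos by auto
    ultimately obtain G where G: "G facet_of P" "{v} \<subseteq> G"
      using face_of_polyhedron_subset_facet[OF polyhedron] by blast
    then have "v \<in> vertices G"
      using v extreme_point_of_face[OF facet_of_imp_face_of[OF G(1)]] by (auto simp: vertices_def)
    then show "v \<in> \<Union>(boundary_facets P)" using G(1) unfolding boundary_facets_eq by blast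
  qed
qed

lemma proper_face_in_boundary_facet:
  assumes F: "F face_of P" "F \<noteq> P"
  obtains B where "B \<in> boundary_facets P" "vertices F \<subseteq> B"
proof (cases "F = {}")
  case True
  obtain G where "G facet_of P" using polytope_facet_exists[OF polytope] aff_dim dim_pos by force
  then show ?thesis using that True by (auto simp: boundary_facets_eq vertices_def)
next
  case False
  then obtain G where G: "G facet_of P" "F \<subseteq> G"
    using face_of_polyhedron_subset_facet[OF polyhedron F(1) False F(2)] by blast
  then have "F face_of G" using face_of_subset[OF F(1) G(2) facet_of_imp_subset[OF G(1)]] by blast
  then show ?thesis using that G(1) vertices_face_subset unfolding boundary_facets_eq by blast
qed

lemma subset_boundary_facet_spans_face:
  assumes "B \<in> boundary_facets P" "S \<subseteq> B"
  shows "convex hull S face_of P" "vertices (convex hull S) = S"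
proof -
  obtain G where G: "G facet_of P" "\<not> affine_dependent B" "G = convex hull B"
    using assms(1) by (rule boundary_facetE)
  have "convex hull S face_of convex hull B"
    by (subst face_of_convex_hull_affine_independent[OF G(2)]) (use assms(2) in blast)
  then show "convex hull S face_of P" using face_of_trans[OF _ facet_of_imp_face_of[OF G(1)]] G(3) by simp
  show "vertices (convex hull S) = S"
    using affine_independent_subset[OF G(2) assms(2)] extreme_point_of_convex_hull_affine_independent
    by (auto simp: vertices_def)
qed

lemma face_vertex_sets_eq:
  "face_vertex_sets P = insert (vertices P) {S. \<exists>B \<in> boundary_facets P. S \<subseteq> B}" (is "_ = ?R")
proof
  show "face_vertex_sets P \<subseteq> ?R"
  proof
    fix S assume "S \<in> face_vertex_sets P"
    then obtain F where F: "F face_of P" "S = vertices F" by (auto simp: face_vertex_sets_def)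
    show "S \<in> ?R"
    proof (cases "F = P")
      case False
      then obtain B where "B \<in> boundary_facets P" "vertices F \<subseteq> B"
        by (rule proper_face_in_boundary_facet[OF F(1)])
      then show ?thesis using F(2) by blast
    qed (use F in simp)
  qed
  have "vertices P \<in> face_vertex_sets P"
    using face_of_refl[OF polytope_imp_convex[OF polytope]] by (auto simp: face_vertex_sets_def)
  moreover have "S \<in> face_vertex_sets P" if "B \<in> boundary_facets P" "S \<subseteq> B" for B S
    using subset_boundary_facet_spans_face[OF that] unfolding face_vertex_sets_def
    by (intro image_eqI[where x = "convex hull S"]) auto
  ultimately show "?R \<subseteq> face_vertex_sets P" by blast
qed

lemma exists_other_vertex: obtains u where "u \<in> vertices P" "u \<noteq> v"
proof (rule ccontr)
  assume "\<not> thesis"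
  then have "vertices P \<subseteq> {v}" using that by blast
  then have "P \<subseteq> {v}"
    using face_eq_convex_hull_vertices[OF polytope face_of_refl[OF polytope_imp_convex[OF polytope]]]
    by (metis convex_hull_singleton hull_mono)
  then have "aff_dim P \<le> 0" using aff_dim_subset[of P "{v}"] by simp
  then show False using aff_dim dim_pos by simp
qed

lemma ridge_in_other_boundary_facet:
  assumes B: "B \<in> boundary_facets P" and v: "v \<in> B"
  shows "\<exists>B' \<in> boundary_facets P. B' \<noteq> B \<and> B - {v} \<subseteq> B'"
proof (cases "B - {v} = {}")
  case True
  obtain u where "u \<in> vertices P" "u \<noteq> v" by (rule exists_other_vertex)
  then obtain B' where "B' \<in> boundary_facets P" "u \<in> B'" using vertices_eq_Union_boundary_facets by blast
  then show ?thesis using True \<open>u \<noteq> v\<close> v by blast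
next
  case False
  obtain G where G: "G facet_of P" "B = vertices G" "\<not> affine_dependent B" "G = convex hull B"
    using B by (rule boundary_facetE)
  let ?R = "B - {v}"
  have "v \<notin> convex hull ?R"
    using G(3) v convex_hull_subset_affine_hull unfolding affine_dependent_def by blast
  then have ne_G: "convex hull ?R \<noteq> G" using v G(4) hull_subset[of B convex] by blast
  have face: "convex hull ?R face_of P" using subset_boundary_facet_spans_face(1)[OF B] by blast
  have sub: "convex hull ?R \<subseteq> G" using G(4) hull_mono[of ?R B] by blast
  have ne: "convex hull ?R \<noteq> {}" using False by simp
  obtain G' where G': "G' facet_of P" "convex hull ?R \<subseteq> G'" "G' \<noteq> G"
    by (rule face_in_second_facet[OF polyhedron face ne G(1) sub ne_G])
  have "vertices G' \<noteq> B"
    using G' G face_eq_convex_hull_vertices[OF polytope] facet_of_imp_face_of by metis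
  moreover have "?R \<subseteq> vertices G'"
  proof
    fix r assume "r \<in> ?R"
    then have "r \<in> G'" using G'(2) hull_subset[of ?R convex] by blast
    moreover have "r \<in> vertices P"
      using \<open>r \<in> ?R\<close> G(2) vertices_face_subset[OF facet_of_imp_face_of[OF G(1)]] by blast
    ultimately show "r \<in> vertices G'"
      using extreme_point_of_face[OF facet_of_imp_face_of[OF G'(1)]] by (simp add: vertices_def)
  qed
  ultimately show ?thesis using G'(1) unfolding boundary_facets_eq by blast
qed

lemma vertex_facet_hyperplane:
  assumes G: "G facet_of P" and a: "P \<subseteq> {x. a \<bullet> x \<le> b}" "G = P \<inter> {x. a \<bullet> x = b}"
    and w: "w \<in> vertices P"
  shows "w \<in> vertices G \<Longrightarrow> a \<bullet> w = b" and "w \<notin> vertices G \<Longrightarrow> a \<bullet> w < b"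
proof -
  have "w \<in> P" using w by (auto simp: vertices_def extreme_point_of_def)
  then have "a \<bullet> w \<le> b" "a \<bullet> w = b \<longleftrightarrow> w \<in> vertices G"
    using w a extreme_point_of_face[OF facet_of_imp_face_of[OF G]]
    by (auto simp: vertices_def extreme_point_of_def)
  then show "w \<in> vertices G \<Longrightarrow> a \<bullet> w = b" and "w \<notin> vertices G \<Longrightarrow> a \<bullet> w < b" by auto
qed

lemma affine_hull_insert_boundary_facet:
  assumes B: "B \<in> boundary_facets P" and "w \<in> P" "w \<notin> affine hull B"
  shows "affine hull (insert w B) = affine hull P"
proof (rule affine_dim_equal)
  obtain G where G: "G facet_of P" "B = vertices G" "\<not> affine_dependent B" "card B = d"
    using B by (rule boundary_facetE)
  have "B \<subseteq> P" using G(1,2) facet_of_imp_subset by (auto simp: vertices_def extreme_point_of_def)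
  then show "affine hull (insert w B) \<subseteq> affine hull P" using \<open>w \<in> P\<close> by (intro hull_mono) auto
  show "aff_dim (affine hull (insert w B)) = aff_dim (affine hull P)"
    using aff_dim_affine_independent[OF G(3)] G(4) aff_dim_insert[of w B] assms(3) aff_dim dim_pos
    by simp
qed (auto simp: affine_affine_hull)

lemma ridge_other_boundary_facet_unique:
  assumes B: "B \<in> boundary_facets P" and v: "v \<in> B"
    and B1: "B1 \<in> boundary_facets P" "B1 \<noteq> B" "B - {v} \<subseteq> B1"
    and B2: "B2 \<in> boundary_facets P" "B2 \<noteq> B" "B - {v} \<subseteq> B2"
  shows "B1 = B2"
proof (rule ccontr)
  assume "B1 \<noteq> B2"
  let ?R = "B - {v}"
  obtain G0 where G0: "G0 facet_of P" "B = vertices G0" "\<not> affine_dependent B" "finite B" "card B = d"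
    using B by (rule boundary_facetE)
  obtain G1 where G1: "G1 facet_of P" "B1 = vertices G1" "finite B1" "card B1 = d"
    using B1(1) by (rule boundary_facetE)
  obtain G2 where G2: "G2 facet_of P" "B2 = vertices G2" "finite B2" "card B2 = d"
    using B2(1) by (rule boundary_facetE)
  have "card B1 = card B" "card B2 = card B" using G0(5) G1(4) G2(4) by simp_all
  obtain w1 where w1: "w1 \<notin> B" "B1 = insert w1 ?R"
    by (rule insert_ridge_if_card_eq[OF G0(4) G1(3) \<open>card B1 = card B\<close> v B1(3,2)])
  obtain w2 where w2: "w2 \<notin> B" "B2 = insert w2 ?R"
    by (rule insert_ridge_if_card_eq[OF G0(4) G2(3) \<open>card B2 = card B\<close> v B2(3,2)])
  have "w1 \<noteq> w2" "v \<noteq> w1" "v \<noteq> w2" "v \<notin> ?R" "w1 \<notin> ?R" "finite ?R"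
    using \<open>B1 \<noteq> B2\<close> w1 w2 v G0(4) by auto
  have V: "v \<in> vertices P" "w1 \<in> vertices P" "w2 \<in> vertices P" "?R \<subseteq> vertices P"
    using B B1(1) B2(1) v w1(2) w2(2) vertices_eq_Union_boundary_facets by auto
  obtain a0 b0 where h0: "P \<subseteq> {x. a0 \<bullet> x \<le> b0}" "G0 = P \<inter> {x. a0 \<bullet> x = b0}"
    using facet_of_polyhedron[OF polyhedron G0(1)] by blast
  obtain a1 b1 where h1: "P \<subseteq> {x. a1 \<bullet> x \<le> b1}" "G1 = P \<inter> {x. a1 \<bullet> x = b1}"
    using facet_of_polyhedron[OF polyhedron G1(1)] by blast
  obtain a2 b2 where h2: "P \<subseteq> {x. a2 \<bullet> x \<le> b2}" "G2 = P \<inter> {x. a2 \<bullet> x = b2}"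
    using facet_of_polyhedron[OF polyhedron G2(1)] by blast
  note on0 = vertex_facet_hyperplane[OF G0(1) h0, folded G0(2)]
    and on1 = vertex_facet_hyperplane[OF G1(1) h1, folded G1(2)]
    and on2 = vertex_facet_hyperplane[OF G2(1) h2, folded G2(2)]
  have "w1 \<in> B1" "v \<notin> B1" "w2 \<notin> B1" "w2 \<in> B2" "v \<notin> B2" "w1 \<notin> B2"
    using w1 w2 \<open>w1 \<noteq> w2\<close> \<open>v \<noteq> w1\<close> \<open>v \<noteq> w2\<close> by auto
  then have below: "a0 \<bullet> w1 < b0" "a0 \<bullet> w2 < b0" "a1 \<bullet> v < b1" "a1 \<bullet> w2 < b1" "a2 \<bullet> v < b2" "a2 \<bullet> w1 < b2"
    using on0(2) on1(2) on2(2) V(1-3) w1(1) w2(1) by auto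
  have "w2 \<notin> affine hull (insert w1 (insert v ?R))"
  proof (rule not_in_affine_hull_three_hyperplanes)
    show "\<forall>r\<in>?R. a0 \<bullet> r = b0" "\<forall>r\<in>?R. a1 \<bullet> r = b1" "\<forall>r\<in>?R. a2 \<bullet> r = b2"
      using on0(1) on1(1) on2(1) V(4) B1(3) B2(3) by blast+
    show "a0 \<bullet> v = b0" "a1 \<bullet> w1 = b1" "a2 \<bullet> w2 = b2"
      using on0(1) on1(1) on2(1) V(1-3) v \<open>w1 \<in> B1\<close> \<open>w2 \<in> B2\<close> by auto
  qed (fact below \<open>finite ?R\<close> \<open>v \<notin> ?R\<close> \<open>w1 \<notin> ?R\<close> \<open>v \<noteq> w1\<close>)+
  moreover have "insert w1 (insert v ?R) = insert w1 B" using v by blast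
  moreover have "affine hull B \<subseteq> {x. a0 \<bullet> x = b0}"
    using on0(1) V(1,4) v by (intro hull_minimal) (auto simp: affine_hyperplane)
  then have "w1 \<notin> affine hull B" using below(1) by auto
  then have "affine hull (insert w1 B) = affine hull P"
    using affine_hull_insert_boundary_facet[OF B] V(2) by (auto simp: vertices_def extreme_point_of_def)
  moreover have "w2 \<in> affine hull P"
    using V(3) hull_subset[of P affine] by (auto simp: vertices_def extreme_point_of_def)
  ultimately show False by simp
qed

lemma face_vertex_sets_if_cross_facets:
  assumes "boundary_facets P = cross_facets \<alpha> \<beta>"
  shows "vertices P = range \<alpha> \<union> range \<beta>"
    and "face_vertex_sets P = insert (vertices P) (cross_faces \<alpha> \<beta>)"
  using assms vertices_eq_Union_boundary_facets Union_cross_facets face_vertex_sets_eq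
  by (simp_all add: cross_faces_def)

lemma layered_pseudomanifold_boundary:
  assumes F0: "F0 \<in> boundary_facets P" and types: "types_are_layers (boundary_facets P) F0"
  shows "layered_pseudomanifold (boundary_facets P) F0"
proof
  fix B assume B: "B \<in> boundary_facets P"
  show "finite B" using B by (rule boundary_facetE)
  show "card B = card F0" using boundary_facetE[OF B] boundary_facetE[OF F0] by metis
  show "\<exists>B' \<in> boundary_facets P. B' \<noteq> B \<and> B - {v} \<subseteq> B'" if "v \<in> B" for v
    using ridge_in_other_boundary_facet[OF B that] .
  show "B1 = B2" if "v \<in> B" "B1 \<in> boundary_facets P" "B2 \<in> boundary_facets P" "B1 \<noteq> B" "B2 \<noteq> B"
    "B - {v} \<subseteq> B1" "B - {v} \<subseteq> B2" for v B1 B2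
    using ridge_other_boundary_facet_unique[OF B that(1,2,4,6,3,5,7)] .
  show "\<exists>i. B \<in> layer (boundary_facets P) F0 i"
    using in_layer_if_types_are_layers[OF types finite_boundary_facets F0 B] .
next
  show "F0 \<in> boundary_facets P" by (rule F0)
  show "card (ridge_restriction G ((\<Union>k<m. layer (boundary_facets P) F0 k) \<union> A)) = m"
    if "G \<in> layer (boundary_facets P) F0 m" "A \<subseteq> layer (boundary_facets P) F0 m - {G}" for G m A
    using card_ridge_restriction_if_types_are_layers[OF types finite_boundary_facets F0 that] .
qed

end

theorem mainTheorem2:
  fixes P :: "'a::euclidean_space set" and F0 :: "'a set"
  assumes "simplicial_polytope CARD('n) P"
    and "F0 \<in> boundary_facets P"
    and "\<forall>L. layered_order (boundary_facets P) F0 L \<longrightarrow>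
           shelling_order L \<and>
           (\<forall>j < length L. \<forall>i. facet_type L j = i \<longleftrightarrow> L ! j \<in> layer (boundary_facets P) F0 i)"
  shows "comb_equiv P (crosspolytope :: (real ^ 'n) set)"
proof -
  interpret simplicial P "CARD('n)"
    using assms(1) by unfold_locales (simp_all add: Suc_le_eq)
  have "types_are_layers (boundary_facets P) F0"
    using assms(3) unfolding types_are_layers_def by blast
  then interpret layered_pseudomanifold "boundary_facets P" F0
    using assms(2) layered_pseudomanifold_boundary by blast
  have "card F0 = CARD('n)" using assms(2) boundary_facetE by metis
  then obtain g :: "'n \<Rightarrow> 'a" where g: "bij_betw g UNIV F0"
    using finite_same_card_bij[of "UNIV :: 'n set" F0] finite_F0 by auto
  note facets = cross_facets_reindex[OF g]
  show ?thesis
    by (rule comb_equiv_if_cross_faces[OF polytope polytope_crosspolytope facets(2-4)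
          crosspolytope_cross_faces(1-3) face_vertex_sets_if_cross_facets(1)[OF facets(1)]
          crosspolytope_cross_faces(4) face_vertex_sets_if_cross_facets(2)[OF facets(1)]
          crosspolytope_cross_faces(5)])
qed

end
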